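(* Consider a repeater chain in the model described in the context with $N+1$ nodes (hence $N$ edges) and elementary-link fidelity $F$ with $\tfrac14<F<1$. Let $Q^*\approx0.110028$ be the unique solution in $[0,\tfrac12]$ of $h(Q)=\tfrac12$, where $h(Q)=-Q\log_2Q-(1-Q)\log_2(1-Q)$, and let $$N^*=\frac{\log(1-2Q^* )}{\log\left(\frac{4F-1}{3}\right)}.$$ Then for every $N\ge N^*$ the secret-key rate of the chain is $\mathrm{SKR}=0$.
   Context: Repeater-chain model (swap-ASAP, synchronized attempts), with arbitrary edge lengths and memory coherence time $T$ at the repeater nodes. Edge $j$ connects nodes $j$ and $j+1$ and has length $l_j\ge0$ (km). Entanglement generation proceeds in synchronized rounds of duration $t_{\mathrm{att}}=\frac1c\max_jl_j$, $c=200{,}000$ km/s. In each round, each edge not yet successful attempts, succeeding independently with probability $p_j=10^{-\alpha l_j/10}$, $\alpha=0.2\ \mathrm{km}^{-1}$; the number of rounds $X_j$ until edge $j$ succeeds is geometric on $\{1,2,\dots\}$ with parameter $p_j$, independently across edges. Edge $j$ completes at time $t_j=t_{\mathrm{att}}X_j$, and the chain completes at $T_{\mathrm{done}}=t_{\mathrm{att}}\max_jX_j$; the entangling rate is $R=1/\mathbb E[T_{\mathrm{done}}]$. Each successful edge produces the two-qubit Werner state $W_{w_0}=w_0|\phi^+\rangle\langle\phi^+|+(1-w_0)\mathbb 1/4$ with $w_0=(4F-1)/3$. Each repeater node (every non-end node) performs entanglement swapping as soon as both of its links exist; meanwhile a stored qubit $k$ held for time $t$ in a memory with coherence time $T$ undergoes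 $\rho\mapsto e^{-t/T}\rho+(1-e^{-t/T})\frac{\mathbb 1_2}{2}\otimes\mathrm{Tr}_k\rho$; end nodes measure immediately and suffer no memory noise. Consequently, given the completion times, the end-to-end state is the Werner state with parameter $w_{e2e}=w_0^{N}\prod_{i}e^{-|t_i-t_{i-1}|/T}$, the product over repeater nodes $i$ (node $i$ sitting between edges $i-1$ and $i$); the delivered state is the Werner state with parameter $\mathbb E[w_{e2e}]$. Its quantum bit error rates are $Q_X=Q_Z=(1-\mathbb E[w_{e2e}])/2$, the secret-key fraction is $\mathrm{SKF}=\max(0,1-h(Q_X)-h(Q_Z))$, and the secret-key rate is $\mathrm{SKR}=R\cdot\mathrm{SKF}$. *)

theory Defs
  imports "HOL-Probability.Probability"
begin

text \<open>Physical constants: speed of light in fibre (km/s) and attenuation (1/km).\<close>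
definition c_light :: real where "c_light = 200000"
definition att_alpha :: real where "att_alpha = 0.2"

definition p_succ :: "real \<Rightarrow> real" where
  "p_succ l = 10 powr (- att_alpha * l / 10)"

definition t_att :: "nat \<Rightarrow> (nat \<Rightarrow> real) \<Rightarrow> real" where
  "t_att N l = Max (l ` {..<N}) / c_light"

text \<open>Joint law of the numbers of rounds X_j (j < N): independent, X_j geometric on {1,2,...}
  with parameter p_succ (l j); entries outside {..<N} are fixed to 0.\<close>
definition X_dist :: "nat \<Rightarrow> (nat \<Rightarrow> real) \<Rightarrow> (nat \<Rightarrow> nat) pmf" where
  "X_dist N l = Pi_pmf {..<N} 0 (\<lambda>j. map_pmf Suc (geometric_pmf (p_succ (l j))))"

definition w0 :: "real \<Rightarrow> real" where "w0 F = (4 * F - 1) / 3"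

text \<open>End-to-end Werner parameter given the round counts x; repeater nodes are 1, ..., N-1,
  node i sits between edges i-1 and i; t_j = t_att * X_j.\<close>
definition w_e2e :: "nat \<Rightarrow> (nat \<Rightarrow> real) \<Rightarrow> real \<Rightarrow> real \<Rightarrow> (nat \<Rightarrow> nat) \<Rightarrow> real" where
  "w_e2e N l T F x =
     w0 F ^ N * (\<Prod>i\<in>{1..<N}. exp (- \<bar>t_att N l * real (x i) - t_att N l * real (x (i - 1))\<bar> / T))"

definition E_w :: "nat \<Rightarrow> (nat \<Rightarrow> real) \<Rightarrow> real \<Rightarrow> real \<Rightarrow> real" where
  "E_w N l T F = measure_pmf.expectation (X_dist N l) (w_e2e N l T F)"

definition ent_rate :: "nat \<Rightarrow> (nat \<Rightarrow> real) \<Rightarrow> real" where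
  "ent_rate N l = 1 / measure_pmf.expectation (X_dist N l)
                        (\<lambda>x. t_att N l * real (Max (x ` {..<N})))"

definition h_bin :: "real \<Rightarrow> real" where
  "h_bin q = - q * log 2 q - (1 - q) * log 2 (1 - q)"

definition QBER :: "nat \<Rightarrow> (nat \<Rightarrow> real) \<Rightarrow> real \<Rightarrow> real \<Rightarrow> real" where
  "QBER N l T F = (1 - E_w N l T F) / 2"

definition SKF :: "nat \<Rightarrow> (nat \<Rightarrow> real) \<Rightarrow> real \<Rightarrow> real \<Rightarrow> real" where
  "SKF N l T F = max 0 (1 - h_bin (QBER N l T F) - h_bin (QBER N l T F))"

definition SKR :: "nat \<Rightarrow> (nat \<Rightarrow> real) \<Rightarrow> real \<Rightarrow> real \<Rightarrow> real" where
  "SKR N l T F = ent_rate N l * SKF N l T F"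

definition Q_star :: real where
  "Q_star = (THE q. 0 \<le> q \<and> q \<le> 1/2 \<and> h_bin q = 1/2)"

definition N_star :: "real \<Rightarrow> real" where
  "N_star F = ln (1 - 2 * Q_star) / ln ((4 * F - 1) / 3)"

end

theory Submission
  imports Defs "HOL-Analysis.Harmonic_Numbers"
begin

text \<open>Memory decoherence only shrinks the Werner parameter, so the delivered parameter is at most
  \<open>w\<^sub>0\<^sup>N\<close>. Once \<open>N \<ge> N*\<close> this is at most \<open>1 - 2Q*\<close>, i.e. the QBER is at least \<open>Q*\<close>; since the
  binary entropy increases on \<open>[0, 1/2]\<close>, \<open>2 h(QBER) \<ge> 2 h(Q*) = 1\<close> and the key fraction vanishes.\<close>

lemma h_bin_conv_ln: "h_bin q = - (q * ln q + (1 - q) * ln (1 - q)) / ln 2"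
  unfolding h_bin_def log_def by (simp add: field_simps)

lemma h_bin_0 [simp]: "h_bin 0 = 0"
  by (simp add: h_bin_def)

lemma h_bin_half [simp]: "h_bin (1/2) = 1"
  by (simp add: h_bin_def log_divide)

lemma has_real_derivative_h_bin:
  assumes "0 < q" "q < 1"
  shows "(h_bin has_real_derivative (ln (1 - q) - ln q) / ln 2) (at q)"
proof -
  have "((\<lambda>q. - (q * ln q + (1 - q) * ln (1 - q)) / ln 2) has_real_derivative
      - ((ln q + q * (1 / q)) + (- ln (1 - q) + (1 - q) * (- 1 / (1 - q)))) / ln 2) (at q)"
    using assms by (auto intro!: derivative_eq_intros)
  also have "- ((ln q + q * (1 / q)) + (- ln (1 - q) + (1 - q) * (- 1 / (1 - q)))) / ln 2
      = (ln (1 - q) - ln q) / ln 2"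
    using assms by (simp add: field_simps)
  finally show ?thesis
    unfolding h_bin_conv_ln [abs_def] .
qed

lemma continuous_on_h_bin:
  assumes "0 < a" "b < 1"
  shows "continuous_on {a..b} h_bin"
proof (intro continuous_at_imp_continuous_on ballI)
  fix x assume "x \<in> {a..b}"
  with assms show "isCont h_bin x"
    using has_real_derivative_h_bin [of x] DERIV_isCont by auto
qed

lemma h_bin_strict_mono:
  assumes "0 < a" "a < b" "b \<le> 1/2"
  shows "h_bin a < h_bin b"
proof (rule DERIV_pos_imp_increasing_open [OF \<open>a < b\<close>])
  fix x assume "a < x" "x < b"
  with assms have "0 < x" "x < 1" "ln x < ln (1 - x)"
    by auto
  then show "\<exists>y. DERIV h_bin x :> y \<and> 0 < y"
    using has_real_derivative_h_bin by force
next
  show "continuous_on {a..b} h_bin"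
    using assms by (intro continuous_on_h_bin) auto
qed

lemma h_bin_one_sixteenth_less: "h_bin (1/16) < 1/2"
proof -
  have "ln (16::real) = 4 * ln 2"
    using ln_realpow [of 2 4] by simp
  then have small: "- (1/16 * ln (1/16::real)) = ln 2 / 4"
    by (simp add: ln_div)
  have "ln (16/15::real) \<le> 1/15"
    using ln_le_minus_one [of "16/15"] by simp
  then have large: "- (15/16 * ln (15/16::real)) \<le> 1/16"
    by (simp add: ln_div)
  have "h_bin (1/16) = (- (1/16 * ln (1/16::real)) - 15/16 * ln (15/16::real)) / ln 2"
    unfolding h_bin_conv_ln by (simp add: field_simps)
  also have "\<dots> \<le> (ln 2 / 4 + 1/16) / ln 2"
    using small large by (intro divide_right_mono) auto
  also have "\<dots> < 1/2"
    using ln2_ge_two_thirds by (simp add: field_simps)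
  finally show ?thesis .
qed

lemma Q_star:
  shows Q_star_pos: "0 < Q_star"
    and Q_star_less_half: "Q_star < 1/2"
    and h_bin_Q_star: "h_bin Q_star = 1/2"
proof -
  obtain q where q: "1/16 \<le> q" "q \<le> 1/2" "h_bin q = 1/2"
    using IVT' [of h_bin "1/16" "1/2" "1/2"] continuous_on_h_bin [of "1/16" "1/2"]
      h_bin_one_sixteenth_less by auto
  have "p = q" if "0 \<le> p" "p \<le> 1/2" "h_bin p = 1/2" for p
  proof -
    have "0 < p"
      using that by (cases "p = 0") auto
    then show ?thesis
      using h_bin_strict_mono [of p q] h_bin_strict_mono [of q p] q that
      by (cases p q rule: linorder_cases) auto
  qed
  then have "Q_star = q"
    unfolding Q_star_def using q by (intro the_equality) auto
  moreover have "q \<noteq> 1/2"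
  proof
    assume "q = 1/2"
    with q(3) show False
      by simp
  qed
  ultimately show "0 < Q_star" "Q_star < 1/2" "h_bin Q_star = 1/2"
    using q by auto
qed

lemma SKF_eq_0_if_QBER_ge_Q_star:
  assumes "Q_star \<le> QBER N l T F" "QBER N l T F \<le> 1/2"
  shows "SKF N l T F = 0"
proof -
  have "1/2 \<le> h_bin (QBER N l T F)"
    using assms h_bin_Q_star h_bin_strict_mono [OF Q_star_pos, of "QBER N l T F"]
    by (cases "QBER N l T F = Q_star") auto
  then show ?thesis
    unfolding SKF_def by simp
qed

lemma w_e2e_bounds:
  assumes "0 \<le> T" "0 \<le> w0 F"
  shows "0 \<le> w_e2e N l T F x \<and> w_e2e N l T F x \<le> w0 F ^ N"
proof -
  let ?decay = "\<lambda>i. exp (- \<bar>t_att N l * real (x i) - t_att N l * real (x (i - 1))\<bar> / T)"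
  have "0 \<le> ?decay i \<and> ?decay i \<le> 1" for i
    using \<open>0 \<le> T\<close> by (simp add: divide_nonpos_nonneg)
  then have "0 \<le> prod ?decay {1..<N}" "prod ?decay {1..<N} \<le> 1"
    by (auto intro: prod_nonneg prod_le_1)
  then show ?thesis
    unfolding w_e2e_def using \<open>0 \<le> w0 F\<close> by (simp add: mult_left_le)
qed

lemma E_w_bounds:
  assumes "0 \<le> T" "0 \<le> w0 F"
  shows "0 \<le> E_w N l T F" "E_w N l T F \<le> w0 F ^ N"
proof -
  note bounds = w_e2e_bounds [OF assms]
  have "integrable (measure_pmf (X_dist N l)) (w_e2e N l T F)"
    using bounds by (intro measure_pmf.integrable_const_bound [where B = "w0 F ^ N"]) auto
  then show "0 \<le> E_w N l T F" "E_w N l T F \<le> w0 F ^ N"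
    unfolding E_w_def using bounds
    by (auto intro: measure_pmf.integral_ge_const measure_pmf.integral_le_const)
qed

lemma power_le_if_ln_ratio_le:
  fixes w b :: real
  assumes "0 < w" "w < 1" "0 < b" "ln b / ln w \<le> real n"
  shows "w ^ n \<le> b"
proof -
  have "ln w < 0"
    using assms by simp
  then have "ln (w ^ n) \<le> ln b"
    using assms by (simp add: ln_realpow divide_le_eq mult.commute)
  then show ?thesis
    using assms by simp
qed

theorem mainTheorem9:
  fixes N :: nat and l :: "nat \<Rightarrow> real" and T F :: real
  assumes "\<forall>j<N. 0 \<le> l j"
    and "0 < T"
    and "1/4 < F" and "F < 1"
    and "real N \<ge> N_star F"
  shows "SKR N l T F = 0"
proof -
  \<comment> \<open>The bound on the Werner parameter holds for every realisation, whatever the edge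
    lengths.\<close>
  have w0: "0 < w0 F" "w0 F < 1"
    using assms(3,4) unfolding w0_def by auto
  have "w0 F ^ N \<le> 1 - 2 * Q_star"
    using assms(5) w0 Q_star_less_half
    by (intro power_le_if_ln_ratio_le) (auto simp: N_star_def w0_def)
  then have "Q_star \<le> QBER N l T F" "QBER N l T F \<le> 1/2"
    using E_w_bounds [of T F N l] assms(2) w0 unfolding QBER_def by auto
  then show ?thesis
    unfolding SKR_def by (simp add: SKF_eq_0_if_QBER_ge_Q_star)
qed

end
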